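(* Let $A\in\mathbb{R}^{m\times n}$ be semi-monotone (i.e. $A^{\dagger}\geq 0$), and let $A=M-N=U-V$ be two proper weak regular splittings of $A$. Then $\rho(H)=\rho(U^{\dagger}VM^{\dagger}N)<1$.
   Context: All matrices are real. $X^{\dagger}$ denotes the Moore–Penrose inverse of $X$, and $\rho(\cdot)$ the spectral radius. For a matrix $X$, $X\geq 0$ means that all entries of $X$ are nonnegative and at least one entry is positive; $X\geq Y$ means $X-Y\geq 0$. $R(X)$ and $N(X)$ denote range and null space. A splitting $A=U-V$ is proper if $R(U)=R(A)$ and $N(U)=N(A)$; it is a proper weak regular splitting if it is proper, $U^{\dagger}\geq 0$ and $U^{\dagger}V\geq 0$. $H=U^{\dagger}VM^{\dagger}N$ is the iteration matrix of the alternating scheme $x^{i+1}=U^{\dagger}VM^{\dagger}Nx^{i}+U^{\dagger}(VM^{\dagger}+I)b$. *)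

theory Defs
  imports "HOL-Analysis.Analysis"
begin

text \<open>Moore--Penrose inverse, defined by the four Penrose equations (the solution is unique).\<close>
definition mp_inverse :: "real^'n^'m \<Rightarrow> real^'m^'n" where
  "mp_inverse A = (THE X. A ** X ** A = A \<and> X ** A ** X = X \<and>
      transpose (A ** X) = A ** X \<and> transpose (X ** A) = X ** A)"

text \<open>Paper's convention: X \<ge> 0 means all entries nonnegative and at least one positive.\<close>
definition mat_nonneg :: "real^'n^'m \<Rightarrow> bool" where
  "mat_nonneg X \<longleftrightarrow> (\<forall>i j. X $ i $ j \<ge> 0) \<and> (\<exists>i j. X $ i $ j > 0)"

definition mat_range :: "real^'n^'m \<Rightarrow> (real^'m) set" where
  "mat_range A = range (\<lambda>x. A *v x)"

definition mat_null :: "real^'n^'m \<Rightarrow> (real^'n) set" where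
  "mat_null A = {x. A *v x = 0}"

definition proper_splitting :: "real^'n^'m \<Rightarrow> real^'n^'m \<Rightarrow> real^'n^'m \<Rightarrow> bool" where
  "proper_splitting A U V \<longleftrightarrow> A = U - V \<and> mat_range U = mat_range A \<and> mat_null U = mat_null A"

definition proper_weak_regular_splitting :: "real^'n^'m \<Rightarrow> real^'n^'m \<Rightarrow> real^'n^'m \<Rightarrow> bool" where
  "proper_weak_regular_splitting A U V \<longleftrightarrow> proper_splitting A U V \<and>
      mat_nonneg (mp_inverse U) \<and> mat_nonneg (mp_inverse U ** V)"

definition semi_monotone :: "real^'n^'m \<Rightarrow> bool" where
  "semi_monotone A \<longleftrightarrow> mat_nonneg (mp_inverse A)"

definition complexify :: "real^'n^'m \<Rightarrow> complex^'n^'m" where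
  "complexify B = (\<chi> i j. complex_of_real (B $ i $ j))"

definition spectral_radius :: "real^'n^'n \<Rightarrow> real" where
  "spectral_radius B = Max {cmod l | l. \<exists>v. v \<noteq> 0 \<and> complexify B *v v = l *s v}"

end

theory Submission
  imports Defs "Jordan_Normal_Form.Spectral_Radius"
begin

no_notation Matrix.vec_index (infixl "$" 100)
no_notation Matrix.scalar_prod (infix "\<bullet>" 70)
hide_const (open) Matrix.mat Spectral_Radius.spectral_radius

text \<open>
  Let \<open>P = A\<^sup>\<dagger>A\<close> and \<open>B = U\<^sup>\<dagger>(VM\<^sup>\<dagger> + I)\<close>. Because both splittings are proper,
  \<open>M\<^sup>\<dagger>M = U\<^sup>\<dagger>U = P\<close>, and the Penrose equations give \<open>BA = P - H\<close> and \<open>BAA\<^sup>\<dagger> = B\<close>; hence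
  \<open>A\<^sup>\<dagger> = HA\<^sup>\<dagger> + B\<close>, i.e. \<open>A\<^sup>\<dagger>b\<close> is a fixed point of the alternating scheme. The partial sums
  of \<open>\<Sum> H\<^sup>kB\<close> then telescope to \<open>A\<^sup>\<dagger> - H\<^sup>jA\<^sup>\<dagger> \<le> A\<^sup>\<dagger>\<close>, since \<open>H \<ge> 0\<close> and \<open>A\<^sup>\<dagger> \<ge> 0\<close>.
  As \<open>0 \<le> U\<^sup>\<dagger> \<le> B\<close>, the nonnegative series \<open>\<Sum> H\<^sup>kU\<^sup>\<dagger>\<close> has bounded partial sums, so
  \<open>H\<^sup>kU\<^sup>\<dagger> \<rightarrow> 0\<close> and with it \<open>H\<^sup>k\<^sup>+\<^sup>1 = H\<^sup>kU\<^sup>\<dagger>(VM\<^sup>\<dagger>N) \<rightarrow> 0\<close>. Powers tending to zero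
  force every eigenvalue of \<open>H\<close> to have modulus below one.
\<close>

lemma matrix_diff_ldistrib: "(A::'a::ring_1^'n^'m) ** (B - C) = A ** B - A ** C"
  by (simp add: matrix_matrix_mult_def Finite_Cartesian_Product.vec_eq_iff sum_subtractf algebra_simps)

lemma matrix_diff_rdistrib: "((A::'a::ring_1^'n^'m) - B) ** C = A ** C - B ** C"
  by (simp add: matrix_matrix_mult_def Finite_Cartesian_Product.vec_eq_iff sum_subtractf algebra_simps)

lemma matrix_add_rdistrib: "((A::'a::ring_1^'n^'m) + B) ** C = A ** C + B ** C"
  by (simp add: matrix_matrix_mult_def Finite_Cartesian_Product.vec_eq_iff sum.distrib algebra_simps)

section \<open>Orthogonal projections\<close>

definition orthogonal_projection :: "'a::euclidean_space set \<Rightarrow> 'a \<Rightarrow> 'a" where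
  "orthogonal_projection S x = (SOME p. p \<in> S \<and> x - p \<in> S\<^sup>\<bottom>)"

context
  fixes S :: "'a::euclidean_space set"
  assumes S: "real_vector.subspace S"
begin

lemma orthogonal_projection_in: "orthogonal_projection S x \<in> S"
  and orthogonal_projection_residual: "x - orthogonal_projection S x \<in> S\<^sup>\<bottom>"
proof -
  have "x \<in> S + S\<^sup>\<bottom>" by (simp add: subspace_sum_orthogonal_comp[OF S])
  then obtain p q where "p \<in> S" "q \<in> S\<^sup>\<bottom>" "x = p + q" by (rule set_plus_elim)
  then have "\<exists>p. p \<in> S \<and> x - p \<in> S\<^sup>\<bottom>" by (intro exI[of _ p]) simp
  from someI_ex[OF this] show "orthogonal_projection S x \<in> S" "x - orthogonal_projection S x \<in> S\<^sup>\<bottom>"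
    unfolding orthogonal_projection_def by auto
qed

lemma orthogonal_projection_eqI:
  assumes "p \<in> S" "x - p \<in> S\<^sup>\<bottom>"
  shows "orthogonal_projection S x = p"
proof -
  have "orthogonal_projection S x - p \<in> S"
    using S assms(1) orthogonal_projection_in by (simp add: real_vector.subspace_diff)
  moreover have "orthogonal_projection S x - p = (x - p) - (x - orthogonal_projection S x)" by simp
  then have "orthogonal_projection S x - p \<in> S\<^sup>\<bottom>"
    using subspace_orthogonal_comp assms(2) orthogonal_projection_residual
    by (metis real_vector.subspace_diff)
  ultimately have "orthogonal_projection S x - p \<in> S \<inter> S\<^sup>\<bottom>" by blast
  then show ?thesis by (simp add: orthogonal_Int_0[OF S])
qed

lemma orthogonal_projection_id: "s \<in> S \<Longrightarrow> orthogonal_projection S s = s"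
  by (rule orthogonal_projection_eqI) (auto intro: real_vector.subspace_0 subspace_orthogonal_comp)

lemma linear_orthogonal_projection: "linear (orthogonal_projection S)"
proof (rule linearI)
  fix x y
  have "(x - orthogonal_projection S x) + (y - orthogonal_projection S y) \<in> S\<^sup>\<bottom>"
    using orthogonal_projection_residual real_vector.subspace_add[OF subspace_orthogonal_comp] by blast
  then show "orthogonal_projection S (x + y) = orthogonal_projection S x + orthogonal_projection S y"
    by (intro orthogonal_projection_eqI)
      (auto simp: real_vector.subspace_add[OF S] orthogonal_projection_in algebra_simps)
next
  fix c x
  show "orthogonal_projection S (c *\<^sub>R x) = c *\<^sub>R orthogonal_projection S x"
    using orthogonal_projection_residual[of x] real_vector.subspace_scale[OF subspace_orthogonal_comp]
    by (intro orthogonal_projection_eqI)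
      (auto simp: real_vector.subspace_scale[OF S] orthogonal_projection_in simp flip: scaleR_diff_right)
qed

lemma orthogonal_projection_self_adjoint:
  "orthogonal_projection S x \<bullet> y = x \<bullet> orthogonal_projection S y"
proof -
  have "\<And>u v. orthogonal_projection S u \<bullet> (v - orthogonal_projection S v) = 0"
    using orthogonal_projection_in orthogonal_projection_residual
    by (auto simp: orthogonal_comp_def real_inner_class.orthogonal_def)
  from this[of x y] this[of y x] show ?thesis
    by (simp add: inner_diff_right inner_commute)
qed

end

section \<open>The Moore--Penrose inverse\<close>

lemma subspace_mat_range: "real_vector.subspace (mat_range A)"
  unfolding mat_range_def
  by (intro real_vector.linear_subspace_image matrix_vector_mul_linear real_vector.subspace_UNIV)

lemma mat_null_eq_orthogonal_comp: "mat_null A = (mat_range (transpose A))\<^sup>\<bottom>"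
  using ker_orthogonal_comp_adjoint[OF matrix_vector_mul_linear, of A]
  by (auto simp: mat_null_def mat_range_def adjoint_matrix)

lemma symmetric_matrix_if_self_adjoint:
  fixes M :: "real^'n^'n"
  assumes "\<And>x y. (M *v x) \<bullet> y = x \<bullet> (M *v y)"
  shows "transpose M = M"
proof -
  have "adjoint ((*v) M) = (*v) M" by (rule adjoint_unique) (use assms in auto)
  then show ?thesis by (simp add: adjoint_matrix matrix_eq fun_eq_iff)
qed

definition moore_penrose :: "real^'n^'m \<Rightarrow> real^'m^'n \<Rightarrow> bool" where
  "moore_penrose A X \<longleftrightarrow> A ** X ** A = A \<and> X ** A ** X = X \<and>
      transpose (A ** X) = A ** X \<and> transpose (X ** A) = X ** A"

text \<open>The solution inverts \<open>A\<close> on the row space \<open>R(A\<^sup>T)\<close> after projecting orthogonally onto \<open>R(A)\<close>.\<close>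

lemma moore_penrose_exists: "\<exists>X. moore_penrose A X"
proof -
  define R where "R = mat_range A"
  define K where "K = mat_range (transpose A)"
  define P where "P = orthogonal_projection R"
  define Q where "Q = orthogonal_projection K"
  have R: "real_vector.subspace R" and K: "real_vector.subspace K"
    unfolding R_def K_def by (rule subspace_mat_range)+
  have null_A: "mat_null A = K\<^sup>\<bottom>" unfolding K_def by (rule mat_null_eq_orthogonal_comp)
  have A_Q: "A *v Q u = A *v u" for u
    using orthogonal_projection_residual[OF K, of u]
    by (simp add: Q_def null_A[symmetric] mat_null_def matrix_vector_mult_diff_distrib)
  have "inj_on ((*v) A) K"
  proof (rule inj_onI)
    fix x y assume "x \<in> K" "y \<in> K" "A *v x = A *v y"
    then have "x - y \<in> K \<inter> K\<^sup>\<bottom>"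
      by (simp add: null_A[symmetric] mat_null_def matrix_vector_mult_diff_distrib
          real_vector.subspace_diff[OF K])
    then show "x = y" using orthogonal_Int_0[OF K] by auto
  qed
  then obtain g where g_K: "range g \<subseteq> K" and lin_g: "linear g" and g_A: "\<forall>x\<in>K. g (A *v x) = x"
    using real_vector.linear_exists_left_inverse_on[OF matrix_vector_mul_linear K] by blast
  define f where "f = g \<circ> P"
  have lin_f: "linear f"
    unfolding f_def P_def by (intro linear_compose lin_g linear_orthogonal_projection R)
  have f_A: "f (A *v x) = Q x" for x
  proof -
    have "P (A *v x) = A *v Q x"
      unfolding P_def A_Q by (rule orthogonal_projection_id[OF R]) (simp add: R_def mat_range_def)
    then show ?thesis
      using g_A orthogonal_projection_in[OF K] by (simp add: f_def Q_def)
  qed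
  have A_f: "A *v f y = P y" for y
  proof -
    obtain u where u: "P y = A *v u"
      using orthogonal_projection_in[OF R, of y] by (auto simp: P_def R_def mat_range_def)
    have "f y = g (A *v Q u)" by (simp add: f_def u A_Q)
    then have "f y = Q u" using g_A orthogonal_projection_in[OF K] by (simp add: Q_def)
    then show ?thesis by (simp add: u A_Q)
  qed
  have Q_f: "Q (f y) = f y" for y
    using g_K orthogonal_projection_id[OF K] by (auto simp: f_def Q_def)
  define X where "X = matrix f"
  have X: "X *v y = f y" for y
    using matrix_vector_mul(2)[OF lin_f] by (simp add: X_def fun_eq_iff)
  have "moore_penrose A X"
    unfolding moore_penrose_def
  proof (intro conjI)
    show "A ** X ** A = A"
      unfolding matrix_eq by (simp add: X f_A A_Q flip: matrix_vector_mul_assoc)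
    show "X ** A ** X = X"
      unfolding matrix_eq by (simp add: X f_A Q_f flip: matrix_vector_mul_assoc)
    show "transpose (A ** X) = A ** X"
    proof (rule symmetric_matrix_if_self_adjoint)
      fix x y
      show "(A ** X *v x) \<bullet> y = x \<bullet> (A ** X *v y)"
        unfolding matrix_vector_mul_assoc[symmetric] X A_f P_def
        by (rule orthogonal_projection_self_adjoint[OF R])
    qed
    show "transpose (X ** A) = X ** A"
    proof (rule symmetric_matrix_if_self_adjoint)
      fix x y
      show "(X ** A *v x) \<bullet> y = x \<bullet> (X ** A *v y)"
        unfolding matrix_vector_mul_assoc[symmetric] X f_A Q_def
        by (rule orthogonal_projection_self_adjoint[OF K])
    qed
  qed
  then show ?thesis by blast
qed

lemma moore_penrose_unique:
  assumes X: "moore_penrose A X" and Y: "moore_penrose A Y"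
  shows "X = Y"
proof -
  have X1: "A ** X ** A = A" and X2: "X ** A ** X = X" and X3: "transpose (A ** X) = A ** X"
    and X4: "transpose (X ** A) = X ** A" using X unfolding moore_penrose_def by auto
  have Y1: "A ** Y ** A = A" and Y2: "Y ** A ** Y = Y" and Y3: "transpose (A ** Y) = A ** Y"
    and Y4: "transpose (Y ** A) = Y ** A" using Y unfolding moore_penrose_def by auto
  have "X = X ** transpose (A ** X)" using X2 X3 by (simp add: matrix_mul_assoc)
  also have "\<dots> = X ** transpose (A ** Y ** A ** X)" using Y1 by simp
  also have "\<dots> = X ** (transpose (A ** X) ** transpose (A ** Y))"
    by (simp add: matrix_transpose_mul matrix_mul_assoc)
  also have "\<dots> = X ** A ** Y" using X2 X3 Y3 by (simp add: matrix_mul_assoc)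
  finally have X_eq: "X = X ** A ** Y" .
  have "Y = transpose (Y ** A) ** Y" using Y2 Y4 by simp
  also have "\<dots> = transpose (Y ** A ** X ** A) ** Y" using X1 by (metis matrix_mul_assoc)
  also have "\<dots> = transpose (X ** A) ** transpose (Y ** A) ** Y"
    by (simp add: matrix_transpose_mul matrix_mul_assoc)
  also have "\<dots> = X ** A ** Y" using X4 Y4 by simp (metis Y2 matrix_mul_assoc)
  finally show ?thesis using X_eq by simp
qed

lemma moore_penrose_mp_inverse: "moore_penrose A (mp_inverse A)"
proof -
  obtain X where X: "moore_penrose A X" using moore_penrose_exists by blast
  have "mp_inverse A = X"
    unfolding mp_inverse_def
    by (rule the_equality) (use X moore_penrose_unique in \<open>auto simp: moore_penrose_def\<close>)
  with X show ?thesis by simp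
qed

lemma mult_projector_of_null_space:
  assumes "mat_null A \<subseteq> mat_null U" "A ** X ** A = A"
  shows "U ** (X ** A) = U"
proof -
  have "U *v ((X ** A) *v x) = U *v x" for x
  proof -
    have "x - (X ** A) *v x \<in> mat_null A"
      using assms(2) by (simp add: mat_null_def matrix_vector_mult_diff_distrib
          matrix_vector_mul_assoc matrix_mul_assoc)
    with assms(1) have "x - (X ** A) *v x \<in> mat_null U" by blast
    then show ?thesis by (simp add: mat_null_def matrix_vector_mult_diff_distrib)
  qed
  then show ?thesis by (simp add: matrix_eq flip: matrix_vector_mul_assoc)
qed

lemma projector_of_range_mult:
  assumes "mat_range U \<subseteq> mat_range A" "A ** X ** A = A"
  shows "A ** X ** U = U"
proof -
  have "(A ** X) *v (U *v x) = U *v x" for x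
  proof -
    obtain w where "U *v x = A *v w" using assms(1) by (auto simp: mat_range_def)
    then show ?thesis using assms(2) by (simp add: matrix_vector_mul_assoc)
  qed
  then show ?thesis by (simp add: matrix_eq flip: matrix_vector_mul_assoc)
qed

lemma moore_penrose_eq_null_projector:
  assumes "mat_null U = mat_null A" "moore_penrose A X" "moore_penrose U Y"
  shows "Y ** U = X ** A"
proof -
  have YU: "transpose (Y ** U) = Y ** U" and XA: "transpose (X ** A) = X ** A"
    using assms by (simp_all add: moore_penrose_def)
  have YUXA: "Y ** U ** (X ** A) = Y ** U"
    using mult_projector_of_null_space[of A U X] assms by (simp add: moore_penrose_def flip: matrix_mul_assoc)
  have XAYU: "X ** A ** (Y ** U) = X ** A"
    using mult_projector_of_null_space[of U A Y] assms by (simp add: moore_penrose_def flip: matrix_mul_assoc)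
  have "Y ** U = transpose (Y ** U) ** transpose (X ** A)" by (simp only: YU XA YUXA)
  also have "\<dots> = transpose (X ** A ** (Y ** U))" by (simp only: matrix_transpose_mul)
  also have "\<dots> = X ** A" by (simp only: XAYU XA)
  finally show ?thesis .
qed

lemma moore_penrose_eq_range_projector:
  assumes "mat_range U = mat_range A" "moore_penrose A X" "moore_penrose U Y"
  shows "U ** Y = A ** X"
proof -
  have UY: "transpose (U ** Y) = U ** Y" and AX: "transpose (A ** X) = A ** X"
    using assms by (simp_all add: moore_penrose_def)
  have AXUY: "A ** X ** (U ** Y) = U ** Y"
    using projector_of_range_mult[of U A X] assms by (simp add: moore_penrose_def matrix_mul_assoc)
  have UYAX: "U ** Y ** (A ** X) = A ** X"
    using projector_of_range_mult[of A U Y] assms by (simp add: moore_penrose_def matrix_mul_assoc)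
  have "U ** Y = transpose (A ** X) ** transpose (U ** Y)" by (simp only: UY AX AXUY)
  also have "\<dots> = transpose (U ** Y ** (A ** X))" by (simp only: matrix_transpose_mul)
  also have "\<dots> = A ** X" by (simp only: UYAX AX)
  finally show ?thesis .
qed

section \<open>Proper splittings\<close>

lemma proper_splitting_mp_inverse:
  assumes "proper_splitting A U V"
  shows "mp_inverse U ** U = mp_inverse A ** A"
    and "mp_inverse U ** (A ** mp_inverse A) = mp_inverse U"
    and "V ** (mp_inverse A ** A) = V"
proof -
  have split: "A = U - V" and range: "mat_range U = mat_range A" and null: "mat_null U = mat_null A"
    using assms by (auto simp: proper_splitting_def)
  have A: "moore_penrose A (mp_inverse A)" and U: "moore_penrose U (mp_inverse U)"
    by (rule moore_penrose_mp_inverse)+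
  show "mp_inverse U ** U = mp_inverse A ** A"
    by (rule moore_penrose_eq_null_projector[OF null A U])
  have "mp_inverse U ** (A ** mp_inverse A) = mp_inverse U ** (U ** mp_inverse U)"
    by (simp only: moore_penrose_eq_range_projector[OF range A U])
  also have "\<dots> = mp_inverse U" using U by (simp add: moore_penrose_def matrix_mul_assoc)
  finally show "mp_inverse U ** (A ** mp_inverse A) = mp_inverse U" .
  have "U ** (mp_inverse A ** A) = U"
    using mult_projector_of_null_space[of A U] null A by (simp add: moore_penrose_def)
  moreover have "A ** (mp_inverse A ** A) = A"
    using A by (simp add: moore_penrose_def matrix_mul_assoc)
  moreover have "V = U - A" using split by simp
  ultimately show "V ** (mp_inverse A ** A) = V" by (simp add: matrix_diff_rdistrib)
qed

lemma alternating_iteration_fixed_point: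
  assumes MN: "proper_splitting A M N" and UV: "proper_splitting A U V"
  defines "H \<equiv> mp_inverse U ** V ** mp_inverse M ** N"
  shows "mp_inverse A = H ** mp_inverse A + mp_inverse U ** (V ** mp_inverse M + mat 1)"
proof -
  define P where "P = mp_inverse A ** A"
  define B where "B = mp_inverse U ** (V ** mp_inverse M + mat 1)"
  have B: "B = mp_inverse U ** V ** mp_inverse M + mp_inverse U"
    by (simp add: B_def matrix_add_ldistrib matrix_mul_assoc)
  have "A = M - N" "A = U - V" using MN UV by (simp_all add: proper_splitting_def)
  have M_P: "mp_inverse M ** M = P" and M_range: "mp_inverse M ** (A ** mp_inverse A) = mp_inverse M"
    using proper_splitting_mp_inverse[OF MN] by (simp_all add: P_def)
  have U_P: "mp_inverse U ** U = P" and U_range: "mp_inverse U ** (A ** mp_inverse A) = mp_inverse U"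
    and V_P: "V ** P = V"
    using proper_splitting_mp_inverse[OF UV] by (simp_all add: P_def)
  have "mp_inverse M ** A = P - mp_inverse M ** N"
    using \<open>A = M - N\<close> M_P by (simp add: matrix_diff_ldistrib)
  then have "mp_inverse U ** V ** mp_inverse M ** A = mp_inverse U ** V - H"
    using V_P by (simp add: H_def matrix_diff_ldistrib flip: matrix_mul_assoc)
  moreover have "mp_inverse U ** A = P - mp_inverse U ** V"
    using \<open>A = U - V\<close> U_P by (simp add: matrix_diff_ldistrib)
  ultimately have BA: "B ** A = P - H" by (simp add: B matrix_add_rdistrib)
  have "B = B ** (A ** mp_inverse A)"
    using M_range U_range by (simp add: B matrix_add_rdistrib flip: matrix_mul_assoc)
  also have "\<dots> = (P - H) ** mp_inverse A" by (simp add: BA matrix_mul_assoc)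
  also have "\<dots> = mp_inverse A - H ** mp_inverse A"
    using moore_penrose_mp_inverse[of A]
    by (simp add: P_def matrix_diff_rdistrib moore_penrose_def flip: matrix_mul_assoc)
  finally show ?thesis by (simp add: B_def)
qed

section \<open>Nonnegative matrices with convergent powers\<close>

primrec matrix_pow :: "'a::semiring_1^'n^'n \<Rightarrow> nat \<Rightarrow> 'a^'n^'n" where
  "matrix_pow H 0 = mat 1"
| "matrix_pow H (Suc k) = matrix_pow H k ** H"

lemma matrix_nonneg_iff: "0 \<le> (X::real^'n^'m) \<longleftrightarrow> (\<forall>i j. 0 \<le> X $ i $ j)"
  unfolding Finite_Cartesian_Product.less_eq_vec_def by simp

lemma nonneg_if_mat_nonneg: "mat_nonneg X \<Longrightarrow> 0 \<le> X"
  by (simp add: mat_nonneg_def matrix_nonneg_iff)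

lemma matrix_mult_left_mono:
  fixes X :: "real^'n^'m"
  assumes "0 \<le> X" "Y \<le> Z"
  shows "X ** Y \<le> X ** Z"
  using assms unfolding Finite_Cartesian_Product.less_eq_vec_def
  by (auto simp: matrix_matrix_mult_def intro!: sum_mono mult_left_mono)

lemma matrix_mult_nonneg: "0 \<le> (X::real^'n^'m) \<Longrightarrow> 0 \<le> Y \<Longrightarrow> 0 \<le> X ** Y"
  using matrix_mult_left_mono[of X 0 Y] by simp

lemma matrix_pow_nonneg: "0 \<le> (H::real^'n^'n) \<Longrightarrow> 0 \<le> matrix_pow H k"
proof (induction k)
  case 0
  show ?case by (simp add: matrix_nonneg_iff Finite_Cartesian_Product.mat_def)
qed (simp add: matrix_mult_nonneg)

lemma tendsto_matrix_mult_right: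
  assumes "(X \<longlongrightarrow> L) F"
  shows "((\<lambda>k. X k ** (W::real^'n^'m)) \<longlongrightarrow> L ** W) F"
proof -
  have "linear (\<lambda>Y::real^'m^'p. Y ** W)"
    by (rule linearI) (simp_all add: matrix_add_rdistrib scalar_matrix_assoc)
  then have "bounded_linear (\<lambda>Y::real^'m^'p. Y ** W)"
    by (simp add: linear_conv_bounded_linear)
  from bounded_linear.tendsto[OF this assms] show ?thesis .
qed

lemma nonneg_bounded_series_tendsto_zero:
  fixes f :: "nat \<Rightarrow> real^'n^'m"
  assumes "\<And>k. 0 \<le> f k" "\<And>j. (\<Sum>k<j. f k) \<le> Z"
  shows "f \<longlonglongrightarrow> 0"
proof (rule vec_tendstoI, rule vec_tendstoI)
  fix i j
  have "summable (\<lambda>k. f k $ i $ j)"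
  proof (rule summableI_nonneg_bounded)
    show "0 \<le> f k $ i $ j" for k using assms(1) by (simp add: matrix_nonneg_iff)
    show "(\<Sum>k<n. f k $ i $ j) \<le> Z $ i $ j" for n
      using assms(2)[of n] by (simp add: Finite_Cartesian_Product.less_eq_vec_def)
  qed
  then show "(\<lambda>k. f k $ i $ j) \<longlonglongrightarrow> 0 $ i $ j" using summable_LIMSEQ_zero by simp
qed

lemma matrix_pow_tendsto_zero:
  fixes H :: "real^'n^'n" and Y Z :: "real^'m^'n" and W :: "real^'n^'m"
  assumes factor: "H = Y ** W" and H: "0 \<le> H" and Y: "0 \<le> Y" and Z: "0 \<le> Z"
    and dominated: "Y \<le> Z - H ** Z"
  shows "matrix_pow H \<longlonglongrightarrow> 0"
proof -
  have telescope: "(\<Sum>k<j. matrix_pow H k ** (Z - H ** Z)) = Z - matrix_pow H j ** Z" for j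
  proof -
    have "(\<Sum>k<j. matrix_pow H k ** (Z - H ** Z))
        = (\<Sum>k<j. matrix_pow H k ** Z - matrix_pow H (Suc k) ** Z)"
      by (simp add: matrix_diff_ldistrib matrix_mul_assoc)
    also have "\<dots> = Z - matrix_pow H j ** Z"
      using sum_lessThan_telescope'[of "\<lambda>k. matrix_pow H k ** Z" j] by simp
    finally show ?thesis .
  qed
  have "(\<lambda>k. matrix_pow H k ** Y) \<longlonglongrightarrow> 0"
  proof (rule nonneg_bounded_series_tendsto_zero)
    show "0 \<le> matrix_pow H k ** Y" for k by (simp add: matrix_mult_nonneg matrix_pow_nonneg H Y)
    show "(\<Sum>k<j. matrix_pow H k ** Y) \<le> Z" for j
    proof -
      have "(\<Sum>k<j. matrix_pow H k ** Y) \<le> (\<Sum>k<j. matrix_pow H k ** (Z - H ** Z))"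
        by (intro sum_mono matrix_mult_left_mono matrix_pow_nonneg H dominated)
      also have "\<dots> \<le> Z"
        using matrix_mult_nonneg[OF matrix_pow_nonneg[OF H] Z, of j] by (simp add: telescope)
      finally show ?thesis .
    qed
  qed
  from tendsto_matrix_mult_right[OF this, of W] have "(\<lambda>k. matrix_pow H (Suc k)) \<longlonglongrightarrow> 0"
    by (simp add: factor matrix_mul_assoc)
  then show ?thesis by (rule LIMSEQ_imp_Suc)
qed

section \<open>Eigenvalues and the spectral radius\<close>

lemma complexify_mult: "complexify (X ** Y) = complexify X ** complexify Y"
  by (simp add: complexify_def matrix_matrix_mult_def Finite_Cartesian_Product.vec_eq_iff)

lemma complexify_mat_1: "complexify (mat 1) = mat 1"
  by (simp add: complexify_def Finite_Cartesian_Product.mat_def Finite_Cartesian_Product.vec_eq_iff)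

lemma matrix_pow_eigenvector:
  assumes "complexify H *v v = l *s v"
  shows "complexify (matrix_pow H k) *v v = l ^ k *s v"
proof (induction k)
  case (Suc k)
  have "complexify (matrix_pow H (Suc k)) *v v = complexify (matrix_pow H k) *v (l *s v)"
    by (simp add: complexify_mult assms flip: matrix_vector_mul_assoc)
  also have "\<dots> = l ^ Suc k *s v"
    using Suc by (simp add: vector_scalar_commute mult.commute)
  finally show ?case .
qed (simp add: complexify_mat_1)

lemma eigenvalue_norm_less_one:
  assumes powers: "matrix_pow H \<longlonglongrightarrow> 0" and v: "v \<noteq> 0"
    and eigen: "complexify H *v v = l *s v"
  shows "cmod l < 1"
proof (rule ccontr)
  assume "\<not> cmod l < 1"
  then have l: "1 \<le> cmod l ^ k" for k by (simp add: one_le_power)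
  obtain i where vi: "v $ i \<noteq> 0"
    using v by (metis Finite_Cartesian_Product.vec_eq_iff zero_index)
  have "(\<lambda>k. complex_of_real (matrix_pow H k $ i $ c)) \<longlonglongrightarrow> 0" for c
    using tendsto_of_real[OF tendsto_vec_nth[OF tendsto_vec_nth[OF powers]], of i c] by simp
  then have "(\<lambda>k. \<Sum>c\<in>UNIV. of_real (matrix_pow H k $ i $ c) * v $ c) \<longlonglongrightarrow> 0"
    by (intro tendsto_null_sum tendsto_mult_left_zero)
  moreover have "(\<Sum>c\<in>UNIV. of_real (matrix_pow H k $ i $ c) * v $ c) = l ^ k * v $ i" for k
    using arg_cong[OF matrix_pow_eigenvector[OF eigen, of k], of "\<lambda>w. w $ i"]
    by (simp add: matrix_vector_mult_def complexify_def)
  ultimately have "(\<lambda>k. l ^ k * v $ i / v $ i) \<longlonglongrightarrow> 0 / v $ i"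
    by (intro tendsto_divide) (simp_all add: vi)
  then have "(\<lambda>k. l ^ k) \<longlonglongrightarrow> 0" using vi by simp
  then have "(\<lambda>k. norm (l ^ k)) \<longlonglongrightarrow> 0" by (rule tendsto_norm_zero)
  then have "(\<lambda>k. cmod l ^ k) \<longlonglongrightarrow> 0" by (simp add: norm_power)
  then have "1 \<le> (0::real)" by (rule LIMSEQ_le_const) (use l in auto)
  then show False by simp
qed

lemma enumeration_of_finite_type:
  obtains h :: "nat \<Rightarrow> 'n::finite" and g where "bij_betw h {0..<CARD('n)} UNIV"
    and "\<And>a. h (g a) = a" and "\<And>a. g a < CARD('n)" and "\<And>i. i < CARD('n) \<Longrightarrow> g (h i) = i"
proof -
  obtain h :: "nat \<Rightarrow> 'n" where h: "bij_betw h {0..<CARD('n)} UNIV"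
    using ex_bij_betw_nat_finite[of "UNIV::'n set"] by auto
  define g where "g = inv_into {0..<CARD('n)} h"
  show thesis
  proof (rule that[OF h])
    show "h (g a) = a" for a using h by (simp add: g_def bij_betw_inv_into_right)
    show "g a < CARD('n)" for a
      using h by (metis UNIV_I atLeastLessThan_iff bij_betw_def g_def inv_into_into)
    show "g (h i) = i" if "i < CARD('n)" for i using h that by (simp add: g_def bij_betw_inv_into_left)
  qed
qed

text \<open>Transfer to the Jordan normal form library, where the spectrum of a complex square matrix
  is known to be finite and nonempty.\<close>

lemma cart_eigenvalues_eq_spectrum:
  fixes C :: "complex^'n^'n"
  obtains J where "J \<in> carrier_mat CARD('n) CARD('n)"
    and "{l. \<exists>v. v \<noteq> 0 \<and> C *v v = l *s v} = spectrum J"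
proof -
  define n where "n = CARD('n)"
  obtain h :: "nat \<Rightarrow> 'n" and g where h: "bij_betw h {0..<n} UNIV"
    and h_g: "\<And>a. h (g a) = a" and g_less: "\<And>a. g a < n" and g_h: "\<And>i. i < n \<Longrightarrow> g (h i) = i"
    unfolding n_def by (rule enumeration_of_finite_type[where 'n = 'n]) blast
  define J where "J = Matrix.mat n n (\<lambda>(i, j). C $ h i $ h j)"
  define to_jnf :: "complex^'n \<Rightarrow> complex Matrix.vec" where "to_jnf v = Matrix.vec n (\<lambda>i. v $ h i)" for v
  have carrier: "to_jnf v \<in> carrier_vec n" for v by (simp add: to_jnf_def)
  have inj: "v = w" if "to_jnf v = to_jnf w" for v w
  proof (rule iffD2[OF Finite_Cartesian_Product.vec_eq_iff], rule allI)
    fix a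
    have "Matrix.vec_index (to_jnf u) (g a) = u $ a" for u by (simp add: to_jnf_def g_less h_g)
    from this[of v] this[of w] that show "v $ a = w $ a" by simp
  qed
  have surj: "to_jnf (\<chi> a. Matrix.vec_index w (g a)) = w" if "w \<in> carrier_vec n" for w
    using that by (intro eq_vecI) (auto simp: to_jnf_def g_h)
  have mult: "to_jnf (C *v v) = J *\<^sub>v to_jnf v" for v
  proof (rule eq_vecI)
    fix i assume "i < dim_vec (J *\<^sub>v to_jnf v)"
    then have i: "i < n" by (simp add: J_def)
    have "(\<Sum>b\<in>UNIV. C $ h i $ b * v $ b) = (\<Sum>j = 0..<n. C $ h i $ h j * v $ h j)"
      by (rule sum.reindex_bij_betw[OF h, symmetric])
    then show "Matrix.vec_index (to_jnf (C *v v)) i = Matrix.vec_index (J *\<^sub>v to_jnf v) i"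
      using i by (simp add: to_jnf_def J_def matrix_vector_mult_def scalar_prod_def)
  qed (simp add: to_jnf_def J_def)
  have scale: "to_jnf (l *s v) = l \<cdot>\<^sub>v to_jnf v" for l v by (intro eq_vecI) (simp_all add: to_jnf_def)
  have zero: "to_jnf 0 = 0\<^sub>v n" by (intro eq_vecI) (simp_all add: to_jnf_def)
  have J: "J \<in> carrier_mat n n" by (simp add: J_def)
  have "(\<exists>v. v \<noteq> 0 \<and> C *v v = l *s v) \<longleftrightarrow> eigenvalue J l" for l
  proof
    assume "\<exists>v. v \<noteq> 0 \<and> C *v v = l *s v"
    then obtain v where "v \<noteq> 0" "C *v v = l *s v" by blast
    then have "eigenvector J (to_jnf v) l"
      using J carrier inj[of v 0] by (auto simp: eigenvector_def zero mult[symmetric] scale)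
    then show "eigenvalue J l" by (auto simp: eigenvalue_def)
  next
    assume "eigenvalue J l"
    then obtain w where w: "w \<in> carrier_vec n" "w \<noteq> 0\<^sub>v n" "J *\<^sub>v w = l \<cdot>\<^sub>v w"
      using J by (auto simp: eigenvalue_def eigenvector_def)
    define v where "v = (\<chi> a. Matrix.vec_index w (g a))"
    have v: "to_jnf v = w" unfolding v_def by (rule surj[OF w(1)])
    have "v \<noteq> 0" using v w(2) zero by auto
    moreover have "C *v v = l *s v" by (rule inj) (simp add: mult scale v w(3))
    ultimately show "\<exists>v. v \<noteq> 0 \<and> C *v v = l *s v" by blast
  qed
  then show thesis using that J by (auto simp: spectrum_def n_def)
qed

lemma spectral_radius_less_one:
  fixes H :: "real^'n^'n"
  assumes "matrix_pow H \<longlonglongrightarrow> 0"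
  shows "spectral_radius H < 1"
proof -
  obtain J where J: "J \<in> carrier_mat CARD('n) CARD('n)"
    and eigenvalues: "{l. \<exists>v. v \<noteq> 0 \<and> complexify H *v v = l *s v} = spectrum J"
    by (rule cart_eigenvalues_eq_spectrum)
  have "spectral_radius H = Max (cmod ` spectrum J)"
    unfolding Defs.spectral_radius_def eigenvalues[symmetric] by (rule arg_cong[of _ _ Max]) blast
  moreover have "finite (spectrum J)" "spectrum J \<noteq> {}"
    using card_finite_spectrum(1)[OF J] spectrum_non_empty[OF J] by simp_all
  moreover have "cmod l < 1" if "l \<in> spectrum J" for l
    using that eigenvalue_norm_less_one[OF assms] by (auto simp flip: eigenvalues)
  ultimately show ?thesis by simp
qed

theorem theorem4p2:
  fixes A M N U V :: "real^'n^'m"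
  assumes "semi_monotone A"
    and "proper_weak_regular_splitting A M N"
    and "proper_weak_regular_splitting A U V"
  shows "spectral_radius (mp_inverse U ** V ** mp_inverse M ** N) < 1"
proof -
  define H where "H = mp_inverse U ** V ** mp_inverse M ** N"
  have MN: "proper_splitting A M N" and UV: "proper_splitting A U V"
    and M: "0 \<le> mp_inverse M" "0 \<le> mp_inverse M ** N"
    and U: "0 \<le> mp_inverse U" "0 \<le> mp_inverse U ** V"
    using assms(2,3) by (simp_all add: proper_weak_regular_splitting_def nonneg_if_mat_nonneg)
  have A: "0 \<le> mp_inverse A"
    using assms(1) by (simp add: semi_monotone_def nonneg_if_mat_nonneg)
  have H: "0 \<le> H"
    using matrix_mult_nonneg[OF U(2) M(2)] by (simp add: H_def matrix_mul_assoc)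
  have "mp_inverse U \<le> mp_inverse U ** V ** mp_inverse M + mp_inverse U"
    using matrix_mult_nonneg[OF U(2) M(1)] by simp
  also have "\<dots> = mp_inverse A - H ** mp_inverse A"
    using alternating_iteration_fixed_point[OF MN UV]
    by (simp add: H_def matrix_add_ldistrib matrix_mul_assoc eq_diff_eq add_ac)
  finally have dominated: "mp_inverse U \<le> mp_inverse A - H ** mp_inverse A" .
  have "H = mp_inverse U ** (V ** mp_inverse M ** N)" by (simp add: H_def matrix_mul_assoc)
  from matrix_pow_tendsto_zero[OF this H U(1) A dominated] have "matrix_pow H \<longlonglongrightarrow> 0" .
  then show ?thesis unfolding H_def by (rule spectral_radius_less_one)
qed

end
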